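(* For every graph $G$ with at least one edge, $wr(G)\le sr(G)\le \lceil (\Delta(G)+1)/2\rceil$, where $\Delta(G)$ is the maximum degree of $G$.
   Context: All graphs are finite, simple and undirected. For a set $E'$ of edges of a graph, the subgraph induced by $E'$ is the graph whose edge set is $E'$ and whose vertex set is the set of endpoints of edges in $E'$. A graph is weakly semiregular if there are two numbers $a,b$ (not necessarily distinct) such that the degree of every vertex is $a$ or $b$; $wr(G)$ is the minimum number of subsets into which $E(G)$ can be partitioned so that the subgraph induced by each subset is weakly semiregular. A graph is semiregular if there is an integer $d$ such that every vertex has degree $d$ or $d+1$; $sr(G)$ is the minimum number of subsets into which $E(G)$ can be partitioned so that the subgraph induced by each subset is semiregular. *)

theory Defs
  imports Complex_Main
begin

definition simple_graph :: "'a set \<Rightarrow> 'a set set \<Rightarrow> bool" where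
  "simple_graph V E \<longleftrightarrow> finite V \<and> (\<forall>e\<in>E. \<exists>u v. u \<noteq> v \<and> u \<in> V \<and> v \<in> V \<and> e = {u, v})"

definition deg :: "'a set set \<Rightarrow> 'a \<Rightarrow> nat" where
  "deg E v = card {e \<in> E. v \<in> e}"

definition max_deg :: "'a set \<Rightarrow> 'a set set \<Rightarrow> nat" where
  "max_deg V E = Max (deg E ` V)"

text \<open>The subgraph induced by an edge set F has vertex set \<Union>F and edge set F.\<close>
definition weakly_semiregular :: "'a set set \<Rightarrow> bool" where
  "weakly_semiregular F \<longleftrightarrow> (\<exists>a b. \<forall>v\<in>\<Union>F. deg F v = a \<or> deg F v = b)"

definition semiregular :: "'a set set \<Rightarrow> bool" where
  "semiregular F \<longleftrightarrow> (\<exists>d. \<forall>v\<in>\<Union>F. deg F v = d \<or> deg F v = Suc d)"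

definition edge_partition :: "'a set set \<Rightarrow> nat \<Rightarrow> (nat \<Rightarrow> 'a set set) \<Rightarrow> bool" where
  "edge_partition E k P \<longleftrightarrow>
     (\<Union>i<k. P i) = E \<and> (\<forall>i<k. P i \<noteq> {}) \<and>
     (\<forall>i<k. \<forall>j<k. i \<noteq> j \<longrightarrow> P i \<inter> P j = {})"

definition wr :: "'a set set \<Rightarrow> nat" where
  "wr E = (LEAST k. \<exists>P. edge_partition E k P \<and> (\<forall>i<k. weakly_semiregular (P i)))"

definition sr :: "'a set set \<Rightarrow> nat" where
  "sr E = (LEAST k. \<exists>P. edge_partition E k P \<and> (\<forall>i<k. semiregular (P i)))"

end

(*
  Orient the edges so that at every vertex out- and in-degree differ by at most one; then both
  are at most K = (\<Delta> + 1) div 2. Colour the arcs with K colours so that no vertex has two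
  outgoing or two incoming arcs of the same colour (Koenig's theorem for the bipartite graph of
  tail and head copies of the vertices). Every colour class then has all degrees 1 or 2, so it is
  semiregular, and the nonempty classes partition E into at most K parts.

  Both steps are the same descent argument: in a finite digraph, a vertex of imbalance at least 2
  reaches a vertex of negative imbalance, and reversing such a path lowers the imbalance at its
  ends without raising it anywhere. For the colouring the digraph is the Kempe digraph of two
  colours, and reversing a path swaps the two colours along an alternating chain.
*)
theory Submission
  imports Defs
begin

section \<open>Imbalance of finite digraphs\<close>

definition out_degree :: "('a \<times> 'a) set \<Rightarrow> 'a \<Rightarrow> nat" where
  "out_degree A x = card {e \<in> A. fst e = x}"

definition in_degree :: "('a \<times> 'a) set \<Rightarrow> 'a \<Rightarrow> nat" where
  "in_degree A x = card {e \<in> A. snd e = x}"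

definition imbalance :: "('a \<times> 'a) set \<Rightarrow> 'a \<Rightarrow> int" where
  "imbalance A x = int (out_degree A x) - int (in_degree A x)"

definition reverse_arcs :: "('a \<times> 'a) set \<Rightarrow> ('a \<times> 'a) set \<Rightarrow> ('a \<times> 'a) set" where
  "reverse_arcs P B = (B - P) \<union> converse P"

lemma card_eq_sum_card_fibres:
  assumes "finite A" and "finite S"
  shows "card {e \<in> A. f e \<in> S} = (\<Sum>c\<in>S. card {e \<in> A. f e = c})"
proof -
  have "{e \<in> A. f e \<in> S} = (\<Union>c\<in>S. {e \<in> A. f e = c})" by auto
  also have "card \<dots> = (\<Sum>c\<in>S. card {e \<in> A. f e = c})"
    by (rule card_UN_disjoint) (use assms in auto)
  finally show ?thesis .
qed

lemma imbalance_Un: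
  assumes "finite X" "finite Y" "X \<inter> Y = {}"
  shows "imbalance (X \<union> Y) x = imbalance X x + imbalance Y x"
proof -
  have "card {e \<in> X \<union> Y. P e} = card {e \<in> X. P e} + card {e \<in> Y. P e}" for P
    by (subst card_Un_disjoint[symmetric]) (use assms in \<open>auto intro: arg_cong[where f = card]\<close>)
  then show ?thesis unfolding imbalance_def out_degree_def in_degree_def by simp
qed

lemma imbalance_singleton: "imbalance {(a, b)} x = of_bool (x = a) - of_bool (x = b)"
proof -
  have "{e \<in> {p}. Q e} = (if Q p then {p} else {})" for p :: "'a \<times> 'a" and Q by auto
  then show ?thesis by (simp add: imbalance_def out_degree_def in_degree_def)
qed

lemma imbalance_empty [simp]: "imbalance {} x = 0"
  by (simp add: imbalance_def out_degree_def in_degree_def)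

lemma imbalance_converse: "imbalance (converse A) x = - imbalance A x"
proof -
  have "card {e \<in> converse A. P e} = card {e \<in> A. P (prod.swap e)}" for P
    by (rule bij_betw_same_card[of prod.swap]) (auto simp: bij_betw_def inj_on_def image_iff)
  then show ?thesis unfolding imbalance_def out_degree_def in_degree_def by simp
qed

lemma imbalance_outside_Field:
  assumes "x \<notin> Field A" shows "imbalance A x = 0"
proof -
  have no_arcs: "{e \<in> A. fst e = x} = {}" "{e \<in> A. snd e = x} = {}"
    using assms by (force simp: Field_def)+
  show ?thesis unfolding imbalance_def out_degree_def in_degree_def no_arcs by simp
qed

lemma imbalance_reverse_arcs:
  assumes "finite B" "P \<subseteq> B" "converse B \<inter> B = {}"
  shows "imbalance (reverse_arcs P B) x = imbalance B x - 2 * imbalance P x"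
proof -
  have fin: "finite P" "finite (B - P)" using assms finite_subset by auto
  have "imbalance B x = imbalance (B - P) x + imbalance P x"
    using imbalance_Un[OF fin(2,1), of x] assms(2) by (simp add: Un_absorb2 Diff_disjoint Int_commute)
  moreover have "imbalance (reverse_arcs P B) x = imbalance (B - P) x + imbalance (converse P) x"
    unfolding reverse_arcs_def by (rule imbalance_Un) (use fin assms in auto)
  ultimately show ?thesis by (simp add: imbalance_converse)
qed

lemma rtrancl_avoiding_source:
  assumes "(y, w) \<in> A\<^sup>*"
  shows "(y, w) \<in> {e \<in> A. snd e \<noteq> y}\<^sup>*"
  using assms
proof (induction rule: rtrancl_induct)
  case (step z z')
  show ?case
  proof (cases "z' = y")
    case False
    with step have "(z, z') \<in> {e \<in> A. snd e \<noteq> y}" by simp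
    with step.IH show ?thesis by (rule rtrancl_into_rtrancl)
  qed simp
qed simp

lemma path_arcs_exist:
  assumes "finite A" and "(v, w) \<in> A\<^sup>*"
  shows "\<exists>P \<subseteq> A. \<forall>x. imbalance P x = of_bool (x = v) - of_bool (x = w)"
  using assms
proof (induction "card A" arbitrary: A v rule: less_induct)
  case less
  show ?case
  proof (cases "v = w")
    case True
    then show ?thesis by (intro exI[of _ "{}"]) simp
  next
    case False
    with less.prems(2) obtain y where vy: "(v, y) \<in> A" and yw: "(y, w) \<in> A\<^sup>*"
      by (metis converse_rtranclE)
    define A' where "A' = {e \<in> A. snd e \<noteq> y}"
    have "A' \<subseteq> A" "(v, y) \<notin> A'" by (auto simp: A'_def)
    then have "A' \<subset> A" using vy by blast
    then have smaller: "card A' < card A" and "finite A'"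
      using less.prems(1) by (auto intro: psubset_card_mono finite_subset)
    have "(y, w) \<in> A'\<^sup>*"
      unfolding A'_def using yw by (rule rtrancl_avoiding_source)
    from less.hyps[OF smaller \<open>finite A'\<close> this] obtain P
      where P: "P \<subseteq> A'" "\<forall>x. imbalance P x = of_bool (x = y) - of_bool (x = w)"
      by blast
    have "(v, y) \<notin> P" "finite P" using P(1) \<open>finite A'\<close> by (auto simp: A'_def finite_subset)
    then have "imbalance ({(v, y)} \<union> P) x = imbalance {(v, y)} x + imbalance P x" for x
      by (intro imbalance_Un) auto
    then have "imbalance ({(v, y)} \<union> P) x = of_bool (x = v) - of_bool (x = w)" for x
      using P(2) by (simp add: imbalance_singleton)
    moreover have "{(v, y)} \<union> P \<subseteq> A" using P(1) vy by (auto simp: A'_def)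
    ultimately show ?thesis by blast
  qed
qed

text \<open>The vertices reachable from v form a set that no arc leaves, so their total imbalance
  is nonpositive.\<close>
lemma surplus_reaches_deficit:
  assumes "finite A" and "imbalance A v > 0"
  shows "\<exists>w. (v, w) \<in> A\<^sup>* \<and> imbalance A w < 0"
proof (rule ccontr)
  assume "\<not> ?thesis"
  then have nonneg: "imbalance A w \<ge> 0" if "(v, w) \<in> A\<^sup>*" for w
    using that by force
  define S where "S = A\<^sup>* `` {v}"
  have "S \<subseteq> insert v (snd ` A)"
  proof
    fix x assume "x \<in> S"
    then have "(v, x) \<in> A\<^sup>*" by (simp add: S_def)
    then show "x \<in> insert v (snd ` A)"
      by (cases rule: rtranclE) (auto intro: rev_image_eqI)
  qed
  then have "finite S" using assms(1) finite_subset by blast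
  have "(\<Sum>x\<in>S. out_degree A x) = card {e \<in> A. fst e \<in> S}"
    unfolding out_degree_def by (rule card_eq_sum_card_fibres[symmetric]) (use assms(1) \<open>finite S\<close> in auto)
  also have "\<dots> \<le> card {e \<in> A. snd e \<in> S}"
    by (rule card_mono) (use assms(1) in \<open>auto simp: S_def intro: rtrancl_into_rtrancl\<close>)
  also have "\<dots> = (\<Sum>x\<in>S. in_degree A x)"
    unfolding in_degree_def by (rule card_eq_sum_card_fibres) (use assms(1) \<open>finite S\<close> in auto)
  finally have "(\<Sum>x\<in>S. imbalance A x) \<le> 0"
    by (simp add: imbalance_def sum_subtractf flip: of_nat_sum)
  moreover have "imbalance A v \<le> (\<Sum>x\<in>S. imbalance A x)"
    by (rule member_le_sum) (use nonneg \<open>finite S\<close> in \<open>auto simp: S_def\<close>)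
  ultimately show False using assms(2) by linarith
qed

lemma reverse_arcs_converse: "reverse_arcs P (converse B) = converse (reverse_arcs (converse P) B)"
  by (auto simp: reverse_arcs_def)

lemma reversal_reduces_imbalance_pos:
  assumes fin: "finite B" and asym: "converse B \<inter> B = {}" and v: "imbalance B v \<ge> 2"
  shows "\<exists>P \<subseteq> B. (\<forall>x. \<bar>imbalance (reverse_arcs P B) x\<bar> \<le> \<bar>imbalance B x\<bar>) \<and>
    \<bar>imbalance (reverse_arcs P B) v\<bar> < \<bar>imbalance B v\<bar>"
proof -
  obtain w where vw: "(v, w) \<in> B\<^sup>*" and w: "imbalance B w < 0"
    using surplus_reaches_deficit[OF fin] v by force
  obtain P where P: "P \<subseteq> B" "\<forall>x. imbalance P x = of_bool (x = v) - of_bool (x = w)"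
    using path_arcs_exist[OF fin vw] by blast
  have "v \<noteq> w" using v w by auto
  have new: "imbalance (reverse_arcs P B) x = imbalance B x - 2 * (of_bool (x = v) - of_bool (x = w))" for x
    using imbalance_reverse_arcs[OF fin P(1) asym] P(2) by simp
  have "\<bar>imbalance (reverse_arcs P B) x\<bar> \<le> \<bar>imbalance B x\<bar>" for x
    using v w by (cases "x = v"; cases "x = w") (simp_all add: new)
  moreover have "\<bar>imbalance (reverse_arcs P B) v\<bar> < \<bar>imbalance B v\<bar>"
    using v \<open>v \<noteq> w\<close> by (simp add: new)
  ultimately show ?thesis using P(1) by blast
qed

lemma reversal_reduces_imbalance:
  assumes fin: "finite B" and asym: "converse B \<inter> B = {}" and v: "\<bar>imbalance B v\<bar> \<ge> 2"
  shows "\<exists>P \<subseteq> B. (\<forall>x. \<bar>imbalance (reverse_arcs P B) x\<bar> \<le> \<bar>imbalance B x\<bar>) \<and>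
    \<bar>imbalance (reverse_arcs P B) v\<bar> < \<bar>imbalance B v\<bar>"
proof (cases "imbalance B v \<ge> 2")
  case True
  then show ?thesis using reversal_reduces_imbalance_pos[OF fin asym] by blast
next
  case False
  then have "imbalance (converse B) v \<ge> 2" using v by (simp add: imbalance_converse)
  then have "\<exists>P \<subseteq> converse B.
      (\<forall>x. \<bar>imbalance (reverse_arcs P (converse B)) x\<bar> \<le> \<bar>imbalance (converse B) x\<bar>) \<and>
      \<bar>imbalance (reverse_arcs P (converse B)) v\<bar> < \<bar>imbalance (converse B) v\<bar>"
    by (intro reversal_reduces_imbalance_pos) (use fin asym in auto)
  then obtain P where "P \<subseteq> converse B"
    "\<forall>x. \<bar>imbalance (reverse_arcs P (converse B)) x\<bar> \<le> \<bar>imbalance (converse B) x\<bar>"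
    "\<bar>imbalance (reverse_arcs P (converse B)) v\<bar> < \<bar>imbalance (converse B) v\<bar>"
    by blast
  then show ?thesis
    by (intro exI[of _ "converse P"]) (auto simp: reverse_arcs_converse imbalance_converse)
qed

section \<open>Balanced orientations\<close>

definition orientation :: "'a set set \<Rightarrow> ('a \<times> 'a) set \<Rightarrow> bool" where
  "orientation E A \<longleftrightarrow>
     (\<forall>(a, b)\<in>A. a \<noteq> b \<and> {a, b} \<in> E \<and> (b, a) \<notin> A) \<and> (\<forall>e\<in>E. \<exists>(a, b)\<in>A. e = {a, b})"

lemma orientation_exists:
  assumes "\<forall>e\<in>E. \<exists>u v. u \<noteq> v \<and> e = {u, v}"
  shows "\<exists>A. orientation E A"
proof -
  from assms have "\<forall>e\<in>E. \<exists>p. fst p \<noteq> snd p \<and> e = {fst p, snd p}" by force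
  then obtain f where f: "\<And>e. e \<in> E \<Longrightarrow> fst (f e) \<noteq> snd (f e) \<and> e = {fst (f e), snd (f e)}"
    by metis
  have "orientation E (f ` E)"
    unfolding orientation_def
  proof (intro conjI ballI)
    fix p assume "p \<in> f ` E"
    then obtain e a b where e: "e \<in> E" "f e = (a, b)" "p = (a, b)" by (metis imageE prod.exhaust)
    then have ab: "a \<noteq> b" "e = {a, b}" using f[OF e(1)] by auto
    have "(b, a) \<notin> f ` E"
    proof
      assume "(b, a) \<in> f ` E"
      then obtain e' where "e' \<in> E" "f e' = (b, a)" by force
      then have "e' = e" using f[of e'] ab by (auto simp: insert_commute)
      then show False using \<open>f e' = (b, a)\<close> e(2) ab(1) by simp
    qed
    then show "case p of (a, b) \<Rightarrow> a \<noteq> b \<and> {a, b} \<in> E \<and> (b, a) \<notin> f ` E"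
      using ab e by simp
  next
    fix e assume "e \<in> E"
    then show "\<exists>(a, b)\<in>f ` E. e = {a, b}" using f by fastforce
  qed
  then show ?thesis by blast
qed

lemma orientation_asym: "orientation E A \<Longrightarrow> converse A \<inter> A = {}"
  unfolding orientation_def by blast

lemma orientation_Field: "orientation E A \<Longrightarrow> Field A \<subseteq> \<Union>E"
  unfolding orientation_def Field_def by blast

lemma inj_on_orientation: "orientation E A \<Longrightarrow> inj_on (\<lambda>(a, b). {a, b}) A"
  unfolding orientation_def by (intro inj_onI) (force simp: doubleton_eq_iff)

lemma image_orientation:
  assumes "orientation E A" shows "(\<lambda>(a, b). {a, b}) ` A = E"
proof
  show "(\<lambda>(a, b). {a, b}) ` A \<subseteq> E" using assms unfolding orientation_def by auto
  show "E \<subseteq> (\<lambda>(a, b). {a, b}) ` A" using assms unfolding orientation_def by fast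
qed

lemma finite_orientation:
  assumes "finite E" "orientation E A" shows "finite A"
  using finite_imageD[of "\<lambda>(a, b). {a, b}" A] assms image_orientation inj_on_orientation by auto

lemma orientation_reverse_arcs:
  assumes "orientation E A" "P \<subseteq> A"
  shows "orientation E (reverse_arcs P A)"
proof -
  have arcs: "a \<noteq> b \<and> {a, b} \<in> E \<and> (b, a) \<notin> A" if "(a, b) \<in> A" for a b
    using assms(1) that unfolding orientation_def by blast
  have "a \<noteq> b \<and> {a, b} \<in> E \<and> (b, a) \<notin> reverse_arcs P A" if "(a, b) \<in> reverse_arcs P A" for a b
    using that arcs[of a b] arcs[of b a] assms(2) by (auto simp: reverse_arcs_def insert_commute)
  moreover have "\<exists>(a, b)\<in>reverse_arcs P A. e = {a, b}" if "e \<in> E" for e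
  proof -
    obtain a b where "(a, b) \<in> A" "e = {a, b}"
      using assms(1) \<open>e \<in> E\<close> unfolding orientation_def by blast
    then show ?thesis
      by (cases "(a, b) \<in> P") (auto simp: reverse_arcs_def insert_commute)
  qed
  ultimately show ?thesis unfolding orientation_def by blast
qed

lemma out_degree_plus_in_degree_le_deg:
  assumes "orientation E A" "finite E"
  shows "out_degree A x + in_degree A x \<le> deg E x"
proof -
  have "finite A" using assms finite_orientation by blast
  have "out_degree A x + in_degree A x = card ({e \<in> A. fst e = x} \<union> {e \<in> A. snd e = x})"
    unfolding out_degree_def in_degree_def
    by (rule card_Un_disjoint[symmetric])
      (use \<open>finite A\<close> assms(1) in \<open>auto simp: orientation_def\<close>)
  also have "\<dots> \<le> card {e \<in> E. x \<in> e}"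
  proof (rule card_inj_on_le)
    show "inj_on (\<lambda>(a, b). {a, b}) ({e \<in> A. fst e = x} \<union> {e \<in> A. snd e = x})"
      using inj_on_orientation[OF assms(1)] by (rule inj_on_subset) auto
    show "(\<lambda>(a, b). {a, b}) ` ({e \<in> A. fst e = x} \<union> {e \<in> A. snd e = x}) \<subseteq> {e \<in> E. x \<in> e}"
      using image_orientation[OF assms(1)] by auto
  qed (use assms(2) in auto)
  finally show ?thesis by (simp add: deg_def)
qed

lemma balanced_orientation_exists:
  assumes "finite E" and two: "\<forall>e\<in>E. \<exists>u v. u \<noteq> v \<and> e = {u, v}"
  shows "\<exists>A. orientation E A \<and> (\<forall>x. \<bar>imbalance A x\<bar> \<le> 1)"
proof -
  define \<Phi> where "\<Phi> A = (\<Sum>x\<in>\<Union>E. nat \<bar>imbalance A x\<bar>)" for A :: "('a \<times> 'a) set"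
  have "finite (\<Union>E)" using assms by force
  obtain A0 where "orientation E A0" using orientation_exists[OF two] by blast
  then obtain A where A: "orientation E A" and min: "\<And>A'. orientation E A' \<Longrightarrow> \<Phi> A \<le> \<Phi> A'"
    using ex_has_least_nat[of "orientation E" A0 \<Phi>] by blast
  have "\<bar>imbalance A v\<bar> \<le> 1" for v
  proof (rule ccontr)
    assume "\<not> ?thesis"
    then have v: "\<bar>imbalance A v\<bar> \<ge> 2" by simp
    then have "v \<in> \<Union>E" using imbalance_outside_Field orientation_Field[OF A] by fastforce
    obtain P where "P \<subseteq> A" and le: "\<forall>x. \<bar>imbalance (reverse_arcs P A) x\<bar> \<le> \<bar>imbalance A x\<bar>"
      and lt: "\<bar>imbalance (reverse_arcs P A) v\<bar> < \<bar>imbalance A v\<bar>"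
      using reversal_reduces_imbalance[OF finite_orientation[OF assms(1) A] orientation_asym[OF A] v]
      by blast
    have "\<Phi> (reverse_arcs P A) < \<Phi> A"
      unfolding \<Phi>_def
    proof (rule sum_strict_mono_ex1)
      show "\<forall>x\<in>\<Union>E. nat \<bar>imbalance (reverse_arcs P A) x\<bar> \<le> nat \<bar>imbalance A x\<bar>"
        using le by (simp add: nat_mono)
      show "\<exists>x\<in>\<Union>E. nat \<bar>imbalance (reverse_arcs P A) x\<bar> < nat \<bar>imbalance A x\<bar>"
        using lt \<open>v \<in> \<Union>E\<close> by (intro bexI[of _ v]) auto
    qed fact
    with min[OF orientation_reverse_arcs[OF A \<open>P \<subseteq> A\<close>]] show False by simp
  qed
  with A show ?thesis by blast
qed

section \<open>Proper arc colourings via Kempe chains\<close>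

definition colour_class :: "('a \<times> 'a) set \<Rightarrow> ('a \<times> 'a \<Rightarrow> nat) \<Rightarrow> nat \<Rightarrow> ('a \<times> 'a) set" where
  "colour_class A col c = {e \<in> A. col e = c}"

text \<open>The bipartite double of a digraph: each vertex x splits into a tail copy (x, True) and a
  head copy (x, False).\<close>
definition split_arc :: "'a \<times> 'a \<Rightarrow> ('a \<times> bool) \<times> ('a \<times> bool)" where
  "split_arc e = ((fst e, True), (snd e, False))"

definition side_degree :: "('a \<times> 'a) set \<Rightarrow> 'a \<times> bool \<Rightarrow> nat" where
  "side_degree A n = (if snd n then out_degree A (fst n) else in_degree A (fst n))"

text \<open>Arcs of colour \<alpha> run from tail to head copies, arcs of colour \<beta> back, so the imbalance
  at a copy is the difference of its two colour degrees.\<close>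
definition kempe_digraph ::
    "('a \<times> 'a) set \<Rightarrow> ('a \<times> 'a \<Rightarrow> nat) \<Rightarrow> nat \<Rightarrow> nat \<Rightarrow> (('a \<times> bool) \<times> ('a \<times> bool)) set" where
  "kempe_digraph A col \<alpha> \<beta> =
     split_arc ` colour_class A col \<alpha> \<union> converse (split_arc ` colour_class A col \<beta>)"

definition kempe_recolour ::
    "('a \<times> 'a \<Rightarrow> nat) \<Rightarrow> nat \<Rightarrow> nat \<Rightarrow> (('a \<times> bool) \<times> ('a \<times> bool)) set \<Rightarrow> 'a \<times> 'a \<Rightarrow> nat" where
  "kempe_recolour col \<alpha> \<beta> P e =
     (if col e = \<alpha> \<and> split_arc e \<in> P then \<beta>
      else if col e = \<beta> \<and> prod.swap (split_arc e) \<in> P then \<alpha> else col e)"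

lemma inj_split_arc: "inj split_arc"
  by (auto intro!: injI simp: split_arc_def prod_eq_iff)

lemma split_arc_neq_swap: "split_arc e \<noteq> prod.swap (split_arc e')"
  by (simp add: split_arc_def)

lemma imbalance_split_arc_image:
  "imbalance (split_arc ` C) n = (if snd n then 1 else -1) * int (side_degree C n)"
proof -
  obtain x b where n: "n = (x, b)" by fastforce
  have card_split: "card (split_arc ` S) = card S" for S
    by (rule card_image) (rule inj_on_subset[OF inj_split_arc], simp)
  have "{q \<in> split_arc ` C. fst q = (x, b)} = (if b then split_arc ` {e \<in> C. fst e = x} else {})"
    "{q \<in> split_arc ` C. snd q = (x, b)} = (if b then {} else split_arc ` {e \<in> C. snd e = x})"
    by (auto simp: split_arc_def)
  then show ?thesis
    by (simp add: n imbalance_def out_degree_def in_degree_def side_degree_def card_split)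
qed

lemma finite_kempe_digraph: "finite A \<Longrightarrow> finite (kempe_digraph A col \<alpha> \<beta>)"
  by (simp add: kempe_digraph_def colour_class_def)

lemma kempe_digraph_asym: "\<alpha> \<noteq> \<beta> \<Longrightarrow> converse (kempe_digraph A col \<alpha> \<beta>) \<inter> kempe_digraph A col \<alpha> \<beta> = {}"
  by (auto simp: kempe_digraph_def colour_class_def split_arc_def)

lemma abs_imbalance_kempe_digraph:
  assumes "finite A"
  shows "\<bar>imbalance (kempe_digraph A col \<alpha> \<beta>) n\<bar> =
     \<bar>int (side_degree (colour_class A col \<alpha>) n) - int (side_degree (colour_class A col \<beta>) n)\<bar>"
proof -
  have "imbalance (kempe_digraph A col \<alpha> \<beta>) n =
      imbalance (split_arc ` colour_class A col \<alpha>) n - imbalance (split_arc ` colour_class A col \<beta>) n"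
    unfolding kempe_digraph_def
    by (subst imbalance_Un) (auto simp: assms colour_class_def imbalance_converse split_arc_def)
  then show ?thesis by (simp add: imbalance_split_arc_image abs_minus_commute)
qed

lemma converse_iff_swap: "q \<in> converse P \<longleftrightarrow> prod.swap q \<in> P"
  by (cases q) simp

lemma kempe_digraph_recolour:
  assumes "\<alpha> \<noteq> \<beta>" and P: "P \<subseteq> kempe_digraph A col \<alpha> \<beta>"
  shows "kempe_digraph A (kempe_recolour col \<alpha> \<beta> P) \<alpha> \<beta> = reverse_arcs P (kempe_digraph A col \<alpha> \<beta>)"
    (is "?K' = reverse_arcs P ?K")
proof -
  have split_mem: "split_arc e \<in> kempe_digraph A c \<alpha> \<beta> \<longleftrightarrow> e \<in> A \<and> c e = \<alpha>" for e c
    by (auto simp: kempe_digraph_def colour_class_def split_arc_def)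
  have swap_mem: "prod.swap (split_arc e) \<in> kempe_digraph A c \<alpha> \<beta> \<longleftrightarrow> e \<in> A \<and> c e = \<beta>" for e c
    by (auto simp: kempe_digraph_def colour_class_def split_arc_def)
  have shape: "(\<exists>e. q = split_arc e) \<or> (\<exists>e. q = prod.swap (split_arc e))"
    if "q \<in> kempe_digraph A c \<alpha> \<beta>" for q c
    using that by (auto simp: kempe_digraph_def colour_class_def converse_iff_swap) (metis swap_swap)
  have "split_arc e \<in> ?K' \<longleftrightarrow> split_arc e \<in> reverse_arcs P ?K" for e
    using P split_mem[of e] swap_mem[of e] assms(1)
    by (auto simp: split_mem reverse_arcs_def converse_iff_swap kempe_recolour_def)
  moreover have "prod.swap (split_arc e) \<in> ?K' \<longleftrightarrow> prod.swap (split_arc e) \<in> reverse_arcs P ?K" for e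
    using P split_mem[of e] swap_mem[of e] assms(1) split_arc_neq_swap[of e e]
    by (auto simp: swap_mem reverse_arcs_def converse_iff_swap kempe_recolour_def)
  moreover have "q \<in> ?K' \<or> q \<in> reverse_arcs P ?K \<Longrightarrow> (\<exists>e. q = split_arc e) \<or> (\<exists>e. q = prod.swap (split_arc e))" for q
    using shape[of q] shape[of "prod.swap q"] P by (auto simp: reverse_arcs_def converse_iff_swap) (metis in_mono swap_swap)
  ultimately show ?thesis by blast
qed

lemma side_degree_Un:
  assumes "finite X" "finite Y" "X \<inter> Y = {}"
  shows "side_degree (X \<union> Y) n = side_degree X n + side_degree Y n"
proof -
  have "card {e \<in> X \<union> Y. Q e} = card {e \<in> X. Q e} + card {e \<in> Y. Q e}" for Q
    by (subst card_Un_disjoint[symmetric]) (use assms in \<open>auto intro: arg_cong[where f = card]\<close>)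
  then show ?thesis by (simp add: side_degree_def out_degree_def in_degree_def)
qed

lemma side_degree_eq_sum_colour_classes:
  assumes "finite A" and "\<forall>e\<in>A. col e < K"
  shows "side_degree A n = (\<Sum>c<K. side_degree (colour_class A col c) n)"
proof -
  have "card {e \<in> A. Q e} = (\<Sum>c<K. card {e \<in> colour_class A col c. Q e})" for Q
  proof -
    have "{e \<in> A. Q e} = {e \<in> {e \<in> A. Q e}. col e \<in> {..<K}}" using assms(2) by auto
    also have "card \<dots> = (\<Sum>c<K. card {e \<in> {e \<in> A. Q e}. col e = c})"
      by (rule card_eq_sum_card_fibres) (use assms(1) in auto)
    also have "\<dots> = (\<Sum>c<K. card {e \<in> colour_class A col c. Q e})"
      by (rule sum.cong) (auto simp: colour_class_def intro: arg_cong[where f = card])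
    finally show ?thesis .
  qed
  then show ?thesis by (simp add: side_degree_def out_degree_def in_degree_def)
qed

lemma colour_class_kempe_recolour_other:
  "c \<noteq> \<alpha> \<Longrightarrow> c \<noteq> \<beta> \<Longrightarrow> colour_class A (kempe_recolour col \<alpha> \<beta> P) c = colour_class A col c"
  by (auto simp: colour_class_def kempe_recolour_def)

lemma side_degree_kempe_recolour_pair:
  assumes "finite A" "\<alpha> \<noteq> \<beta>"
  shows "side_degree (colour_class A (kempe_recolour col \<alpha> \<beta> P) \<alpha>) n
      + side_degree (colour_class A (kempe_recolour col \<alpha> \<beta> P) \<beta>) n
    = side_degree (colour_class A col \<alpha>) n + side_degree (colour_class A col \<beta>) n"
proof -
  have pair: "side_degree (colour_class A c \<alpha>) n + side_degree (colour_class A c \<beta>) n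
      = side_degree {e \<in> A. c e \<in> {\<alpha>, \<beta>}} n" for c
  proof -
    have "side_degree (colour_class A c \<alpha>) n + side_degree (colour_class A c \<beta>) n
        = side_degree (colour_class A c \<alpha> \<union> colour_class A c \<beta>) n"
      by (rule side_degree_Un[symmetric]) (use assms in \<open>auto simp: colour_class_def\<close>)
    also have "colour_class A c \<alpha> \<union> colour_class A c \<beta> = {e \<in> A. c e \<in> {\<alpha>, \<beta>}}"
      by (auto simp: colour_class_def)
    finally show ?thesis .
  qed
  have "{e \<in> A. kempe_recolour col \<alpha> \<beta> P e \<in> {\<alpha>, \<beta>}} = {e \<in> A. col e \<in> {\<alpha>, \<beta>}}"
    by (auto simp: kempe_recolour_def)
  then show ?thesis by (simp only: pair)
qed

text \<open>With a + b fixed, a^2 + b^2 = ((a + b)^2 + (a - b)^2) / 2 is monotone in |a - b|.\<close>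
lemma sum_squares_mono_same_sum:
  fixes a b a' b' :: nat
  assumes "a' + b' = a + b"
  shows "\<bar>int a' - int b'\<bar> \<le> \<bar>int a - int b\<bar> \<Longrightarrow> a'\<^sup>2 + b'\<^sup>2 \<le> a\<^sup>2 + b\<^sup>2"
    and "\<bar>int a' - int b'\<bar> < \<bar>int a - int b\<bar> \<Longrightarrow> a'\<^sup>2 + b'\<^sup>2 < a\<^sup>2 + b\<^sup>2"
proof -
  have sq: "int (x\<^sup>2 + y\<^sup>2) * 2 = (int x + int y)\<^sup>2 + (int x - int y)\<^sup>2" for x y :: nat
    by (simp add: power2_eq_square algebra_simps)
  have sum: "int a' + int b' = int a + int b"
    using assms by (metis of_nat_add)
  show "a'\<^sup>2 + b'\<^sup>2 \<le> a\<^sup>2 + b\<^sup>2" if "\<bar>int a' - int b'\<bar> \<le> \<bar>int a - int b\<bar>"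
  proof -
    have "int (a'\<^sup>2 + b'\<^sup>2) * 2 \<le> int (a\<^sup>2 + b\<^sup>2) * 2"
      unfolding sq sum using that by (simp add: abs_le_square_iff)
    then show ?thesis by (simp only: mult_le_cancel_right of_nat_le_iff)
  qed
  show "a'\<^sup>2 + b'\<^sup>2 < a\<^sup>2 + b\<^sup>2" if "\<bar>int a' - int b'\<bar> < \<bar>int a - int b\<bar>"
  proof -
    have "int (a'\<^sup>2 + b'\<^sup>2) * 2 < int (a\<^sup>2 + b\<^sup>2) * 2"
      unfolding sq sum using that by (simp add: abs_le_square_iff flip: not_le)
    then show ?thesis by (simp only: mult_less_cancel_right of_nat_less_iff)
  qed
qed

definition colour_energy :: "('a \<times> 'a) set \<Rightarrow> nat \<Rightarrow> ('a \<times> 'a \<Rightarrow> nat) \<Rightarrow> 'a \<times> bool \<Rightarrow> nat" where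
  "colour_energy A K col n = (\<Sum>c<K. (side_degree (colour_class A col c) n)\<^sup>2)"

lemma colour_energy_kempe_recolour:
  assumes "finite A" "\<alpha> < K" "\<beta> < K" "\<alpha> \<noteq> \<beta>" and P: "P \<subseteq> kempe_digraph A col \<alpha> \<beta>"
  defines "B \<equiv> kempe_digraph A col \<alpha> \<beta>"
  shows "\<bar>imbalance (reverse_arcs P B) n\<bar> \<le> \<bar>imbalance B n\<bar> \<Longrightarrow>
      colour_energy A K (kempe_recolour col \<alpha> \<beta> P) n \<le> colour_energy A K col n"
    and "\<bar>imbalance (reverse_arcs P B) n\<bar> < \<bar>imbalance B n\<bar> \<Longrightarrow>
      colour_energy A K (kempe_recolour col \<alpha> \<beta> P) n < colour_energy A K col n"
proof -
  let ?col' = "kempe_recolour col \<alpha> \<beta> P"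
  let ?d = "\<lambda>c \<gamma>. side_degree (colour_class A c \<gamma>) n"
  let ?rest = "{..<K} - {\<alpha>, \<beta>}"
  have split: "colour_energy A K c n = ((?d c \<alpha>)\<^sup>2 + (?d c \<beta>)\<^sup>2) + (\<Sum>\<gamma>\<in>?rest. (?d c \<gamma>)\<^sup>2)" for c
  proof -
    have "insert \<alpha> (insert \<beta> ?rest) = {..<K}" using assms(2,3) by auto
    then have "colour_energy A K c n = (\<Sum>\<gamma>\<in>insert \<alpha> (insert \<beta> ?rest). (?d c \<gamma>)\<^sup>2)"
      unfolding colour_energy_def by (simp only:)
    then show ?thesis using assms(4) by (simp add: add.assoc)
  qed
  have rest: "(\<Sum>\<gamma>\<in>?rest. (?d ?col' \<gamma>)\<^sup>2) = (\<Sum>\<gamma>\<in>?rest. (?d col \<gamma>)\<^sup>2)"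
    by (rule sum.cong) (auto simp: colour_class_kempe_recolour_other)
  have same_sum: "?d ?col' \<alpha> + ?d ?col' \<beta> = ?d col \<alpha> + ?d col \<beta>"
    by (rule side_degree_kempe_recolour_pair) (use assms in auto)
  have "\<bar>imbalance (reverse_arcs P B) n\<bar> = \<bar>int (?d ?col' \<alpha>) - int (?d ?col' \<beta>)\<bar>"
    unfolding B_def kempe_digraph_recolour[OF assms(4) P, symmetric]
    by (rule abs_imbalance_kempe_digraph) (use assms in auto)
  moreover have "\<bar>imbalance B n\<bar> = \<bar>int (?d col \<alpha>) - int (?d col \<beta>)\<bar>"
    unfolding B_def by (rule abs_imbalance_kempe_digraph) (use assms in auto)
  ultimately show "\<bar>imbalance (reverse_arcs P B) n\<bar> \<le> \<bar>imbalance B n\<bar> \<Longrightarrow>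
      colour_energy A K ?col' n \<le> colour_energy A K col n"
    and "\<bar>imbalance (reverse_arcs P B) n\<bar> < \<bar>imbalance B n\<bar> \<Longrightarrow>
      colour_energy A K ?col' n < colour_energy A K col n"
    using sum_squares_mono_same_sum[OF same_sum] by (simp_all add: split rest)
qed

lemma ex_zero_term_if_sum_le_card:
  fixes f :: "nat \<Rightarrow> nat"
  assumes "(\<Sum>c<K. f c) \<le> K" "\<alpha> < K" "f \<alpha> \<ge> 2"
  shows "\<exists>\<beta><K. f \<beta> = 0"
proof (rule ccontr)
  assume "\<not> ?thesis"
  then have "(\<Sum>c\<in>{..<K} - {\<alpha>}. 1) \<le> (\<Sum>c\<in>{..<K} - {\<alpha>}. f c)"
    by (intro sum_mono) (simp add: Suc_le_eq)
  moreover have "(\<Sum>c<K. f c) = f \<alpha> + (\<Sum>c\<in>{..<K} - {\<alpha>}. f c)"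
    using assms(2) by (simp add: sum.remove)
  ultimately show False using assms by simp
qed

lemma side_degree_pos_imp_arc:
  assumes "side_degree X n > 0"
  shows "\<exists>e\<in>X. (if snd n then fst e else snd e) = fst n"
  using assms by (cases "snd n") (force simp: side_degree_def out_degree_def in_degree_def card_gt_0_iff)+

lemma kempe_swap_reduces_colour_energy:
  assumes fin: "finite A" and col: "\<forall>e\<in>A. col e < K" and deg: "\<forall>m. side_degree A m \<le> K"
    and over: "side_degree (colour_class A col \<alpha>) n \<ge> 2"
  shows "\<exists>col'. (\<forall>e\<in>A. col' e < K) \<and>
    (\<Sum>m\<in>Field A \<times> UNIV. colour_energy A K col' m) < (\<Sum>m\<in>Field A \<times> UNIV. colour_energy A K col m)"
proof -
  obtain e where e: "e \<in> A" "col e = \<alpha>" "(if snd n then fst e else snd e) = fst n"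
    using side_degree_pos_imp_arc[of "colour_class A col \<alpha>" n] over by (auto simp: colour_class_def)
  then have "fst n \<in> Field A"
    by (force simp: Field_def Domain_fst Range_snd split: if_splits)
  then have "n \<in> Field A \<times> UNIV" by (cases n) simp
  have "\<alpha> < K" using col e by auto
  obtain \<beta> where "\<beta> < K" and \<beta>: "side_degree (colour_class A col \<beta>) n = 0"
    using ex_zero_term_if_sum_le_card[of "\<lambda>c. side_degree (colour_class A col c) n" K \<alpha>]
      \<open>\<alpha> < K\<close> over deg[rule_format, of n]
      side_degree_eq_sum_colour_classes[OF fin col, of n] by auto
  with over have "\<alpha> \<noteq> \<beta>" by auto
  define B where "B = kempe_digraph A col \<alpha> \<beta>"
  have "\<bar>imbalance B n\<bar> \<ge> 2"
    unfolding B_def abs_imbalance_kempe_digraph[OF fin] using over \<beta> by simp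
  then have "\<exists>P \<subseteq> B. (\<forall>m. \<bar>imbalance (reverse_arcs P B) m\<bar> \<le> \<bar>imbalance B m\<bar>) \<and>
      \<bar>imbalance (reverse_arcs P B) n\<bar> < \<bar>imbalance B n\<bar>"
    unfolding B_def
    by (rule reversal_reduces_imbalance[OF finite_kempe_digraph[OF fin] kempe_digraph_asym[OF \<open>\<alpha> \<noteq> \<beta>\<close>]])
  then obtain P where P: "P \<subseteq> B" and le: "\<And>m. \<bar>imbalance (reverse_arcs P B) m\<bar> \<le> \<bar>imbalance B m\<bar>"
      and lt: "\<bar>imbalance (reverse_arcs P B) n\<bar> < \<bar>imbalance B n\<bar>"
    by blast
  define col' where "col' = kempe_recolour col \<alpha> \<beta> P"
  note energy = colour_energy_kempe_recolour[OF fin \<open>\<alpha> < K\<close> \<open>\<beta> < K\<close> \<open>\<alpha> \<noteq> \<beta>\<close> P[unfolded B_def],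
      folded B_def col'_def]
  have "\<forall>e\<in>A. col' e < K"
    using col \<open>\<alpha> < K\<close> \<open>\<beta> < K\<close> by (simp add: col'_def kempe_recolour_def)
  moreover have "(\<Sum>m\<in>Field A \<times> UNIV. colour_energy A K col' m) < (\<Sum>m\<in>Field A \<times> UNIV. colour_energy A K col m)"
  proof (rule sum_strict_mono_ex1)
    show "finite (Field A \<times> (UNIV :: bool set))" using fin by (simp add: finite_Field)
    show "\<forall>m\<in>Field A \<times> UNIV. colour_energy A K col' m \<le> colour_energy A K col m"
      using energy(1)[OF le] by blast
    show "\<exists>m\<in>Field A \<times> UNIV. colour_energy A K col' m < colour_energy A K col m"
      using energy(2)[OF lt] \<open>n \<in> Field A \<times> UNIV\<close> by blast
  qed
  ultimately show ?thesis by blast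
qed

lemma proper_arc_colouring_exists:
  assumes fin: "finite A" and deg: "\<forall>x. out_degree A x \<le> K \<and> in_degree A x \<le> K"
  shows "\<exists>col. (\<forall>e\<in>A. col e < K) \<and>
    (\<forall>c x. out_degree (colour_class A col c) x \<le> 1 \<and> in_degree (colour_class A col c) x \<le> 1)"
proof -
  have deg': "\<forall>m. side_degree A m \<le> K" using deg by (simp add: side_degree_def)
  define \<Psi> where "\<Psi> col = (\<Sum>m\<in>Field A \<times> UNIV. colour_energy A K col m)" for col
  have "\<forall>e\<in>A. (0::nat) < K"
  proof
    fix e assume "e \<in> A"
    then have "e \<in> {e' \<in> A. fst e' = fst e}" by simp
    moreover have "finite {e' \<in> A. fst e' = fst e}" using fin by simp
    ultimately have "0 < out_degree A (fst e)"
      unfolding out_degree_def by (metis card_0_eq empty_iff gr0I)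
    then show "0 < K" using deg by (meson less_le_trans)
  qed
  then obtain col where col: "\<forall>e\<in>A. col e < K"
    and min: "\<And>col'. \<forall>e\<in>A. col' e < K \<Longrightarrow> \<Psi> col \<le> \<Psi> col'"
    using ex_has_least_nat[of "\<lambda>col. \<forall>e\<in>A. col e < K" "\<lambda>_. 0" \<Psi>] by blast
  have proper: "side_degree (colour_class A col c) m \<le> 1" for c m
  proof (rule ccontr)
    assume "\<not> ?thesis"
    then have "side_degree (colour_class A col c) m \<ge> 2" by simp
    from kempe_swap_reduces_colour_energy[OF fin col deg' this] obtain col'
      where "\<forall>e\<in>A. col' e < K" "\<Psi> col' < \<Psi> col"
      unfolding \<Psi>_def by blast
    with min show False by (simp add: not_le[symmetric])
  qed
  have "out_degree (colour_class A col c) x \<le> 1 \<and> in_degree (colour_class A col c) x \<le> 1" for c x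
    using proper[of c "(x, True)"] proper[of c "(x, False)"] by (simp add: side_degree_def)
  with col show ?thesis by blast
qed

section \<open>Semiregular edge partitions\<close>

lemma deg_le_max_deg:
  assumes "simple_graph V E"
  shows "deg E x \<le> max_deg V E"
proof (cases "x \<in> V")
  case True
  with assms show ?thesis by (simp add: max_deg_def simple_graph_def)
next
  case False
  with assms have no_edges: "{e \<in> E. x \<in> e} = {}" by (auto simp: simple_graph_def)
  show ?thesis unfolding deg_def no_edges by simp
qed

lemma finite_edges: "simple_graph V E \<Longrightarrow> finite E"
proof -
  assume "simple_graph V E"
  then have "E \<subseteq> Pow V" "finite V" by (auto simp: simple_graph_def)
  then show "finite E" by (meson finite_Pow_iff finite_subset)
qed

lemma deg_image_arcs_le:
  assumes "finite A"
  shows "deg ((\<lambda>(a, b). {a, b}) ` A) v \<le> out_degree A v + in_degree A v"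
proof -
  let ?U = "{p \<in> A. fst p = v} \<union> {p \<in> A. snd p = v}"
  have "finite ?U" using assms by simp
  have "deg ((\<lambda>(a, b). {a, b}) ` A) v \<le> card ((\<lambda>(a, b). {a, b}) ` ?U)"
    unfolding deg_def by (rule card_mono) (use \<open>finite ?U\<close> in auto)
  also have "\<dots> \<le> card ?U"
    using \<open>finite ?U\<close> by (rule card_image_le)
  also have "\<dots> \<le> out_degree A v + in_degree A v"
    unfolding out_degree_def in_degree_def by (rule card_Un_le)
  finally show ?thesis .
qed

lemma semiregular_if_deg_le_2:
  assumes "finite F" and "\<forall>v. deg F v \<le> 2"
  shows "semiregular F"
  unfolding semiregular_def
proof (intro exI[of _ 1] ballI)
  fix v assume "v \<in> \<Union>F"
  then have "{e \<in> F. v \<in> e} \<noteq> {}" by blast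
  then have "deg F v \<ge> 1" using assms(1) by (simp add: deg_def Suc_le_eq card_gt_0_iff)
  moreover have "deg F v \<le> 2" using assms(2) by blast
  ultimately show "deg F v = 1 \<or> deg F v = Suc 1" by linarith
qed

lemma edge_partition_from_cover:
  assumes "(\<Union>c<K. C c) = E" and "\<forall>c<K. \<forall>d<K. c \<noteq> d \<longrightarrow> C c \<inter> C d = {}"
  shows "\<exists>m P. m \<le> K \<and> edge_partition E m P \<and> (\<forall>i<m. \<exists>c<K. P i = C c)"
proof -
  define xs where "xs = sorted_list_of_set {c \<in> {..<K}. C c \<noteq> {}}"
  have set_xs: "set xs = {c \<in> {..<K}. C c \<noteq> {}}" and "distinct xs"
    by (simp_all add: xs_def)
  have "length xs = card {c \<in> {..<K}. C c \<noteq> {}}"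
    using distinct_card[OF \<open>distinct xs\<close>] by (simp add: set_xs)
  also have "\<dots> \<le> K"
    using card_mono[of "{..<K}" "{c \<in> {..<K}. C c \<noteq> {}}"] by auto
  finally have "length xs \<le> K" .
  moreover have "edge_partition E (length xs) (\<lambda>i. C (xs ! i))"
    unfolding edge_partition_def
  proof (intro conjI allI impI)
    have "(\<Union>i<length xs. C (xs ! i)) = (\<Union>c\<in>set xs. C c)" by (auto simp: set_conv_nth)
    also have "\<dots> = E" using assms(1) by (auto simp: set_xs)
    finally show "(\<Union>i<length xs. C (xs ! i)) = E" .
  next
    fix i assume "i < length xs"
    then show "C (xs ! i) \<noteq> {}" using set_xs nth_mem by blast
  next
    fix i j assume "i < length xs" "j < length xs" "i \<noteq> j"
    moreover from this have "xs ! i < K" "xs ! j < K" using set_xs nth_mem by fastforce+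
    ultimately show "C (xs ! i) \<inter> C (xs ! j) = {}"
      using assms(2) \<open>distinct xs\<close> by (simp add: nth_eq_iff_index_eq)
  qed
  moreover have "\<forall>i<length xs. \<exists>c<K. C (xs ! i) = C c" using set_xs nth_mem by blast
  ultimately show ?thesis by blast
qed

lemma sr_le:
  assumes "edge_partition E k P" and "\<forall>i<k. semiregular (P i)"
  shows "sr E \<le> k"
  unfolding sr_def by (rule Least_le) (use assms in blast)

lemma semiregular_imp_weakly_semiregular: "semiregular F \<Longrightarrow> weakly_semiregular F"
  unfolding semiregular_def weakly_semiregular_def by blast

lemma wr_le_sr:
  assumes "edge_partition E k P" and "\<forall>i<k. semiregular (P i)"
  shows "wr E \<le> sr E"
proof -
  obtain Q where "edge_partition E (sr E) Q" "\<forall>i<sr E. semiregular (Q i)"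
    using LeastI[of "\<lambda>k. \<exists>P. edge_partition E k P \<and> (\<forall>i<k. semiregular (P i))" k] assms
    unfolding sr_def by blast
  then show ?thesis
    unfolding wr_def by (intro Least_le) (blast intro: semiregular_imp_weakly_semiregular)
qed

lemma balanced_orientation_degrees_le:
  assumes "simple_graph V E" "orientation E A" "\<bar>imbalance A x\<bar> \<le> 1"
  shows "out_degree A x \<le> (max_deg V E + 1) div 2 \<and> in_degree A x \<le> (max_deg V E + 1) div 2"
proof -
  have "out_degree A x + in_degree A x \<le> max_deg V E"
    using out_degree_plus_in_degree_le_deg[OF assms(2) finite_edges[OF assms(1)]]
      deg_le_max_deg[OF assms(1)] le_trans by blast
  with assms(3) have "2 * out_degree A x \<le> max_deg V E + 1" "2 * in_degree A x \<le> max_deg V E + 1"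
    unfolding imbalance_def by linarith+
  then show ?thesis by (simp add: less_eq_div_iff_mult_less_eq mult.commute)
qed

lemma semiregular_proper_colour_class:
  assumes "finite A"
    and "\<forall>x. out_degree (colour_class A col c) x \<le> 1 \<and> in_degree (colour_class A col c) x \<le> 1"
  shows "semiregular ((\<lambda>(a, b). {a, b}) ` colour_class A col c)"
proof (rule semiregular_if_deg_le_2)
  show "finite ((\<lambda>(a, b). {a, b}) ` colour_class A col c)"
    using assms(1) by (simp add: colour_class_def)
  show "\<forall>v. deg ((\<lambda>(a, b). {a, b}) ` colour_class A col c) v \<le> 2"
  proof
    fix v
    have "deg ((\<lambda>(a, b). {a, b}) ` colour_class A col c) v
        \<le> out_degree (colour_class A col c) v + in_degree (colour_class A col c) v"
      by (rule deg_image_arcs_le) (simp add: assms(1) colour_class_def)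
    with assms(2) show "deg ((\<lambda>(a, b). {a, b}) ` colour_class A col c) v \<le> 2"
      by (metis add_mono le_trans one_add_one)
  qed
qed

lemma semiregular_cover_exists:
  assumes sg: "simple_graph V E"
  defines "K \<equiv> (max_deg V E + 1) div 2"
  shows "\<exists>C. (\<Union>c<K. C c) = E \<and> (\<forall>c<K. \<forall>d<K. c \<noteq> d \<longrightarrow> C c \<inter> C d = {}) \<and>
    (\<forall>c. semiregular (C c))"
proof -
  have "finite E" using sg by (rule finite_edges)
  moreover have "\<forall>e\<in>E. \<exists>u v. u \<noteq> v \<and> e = {u, v}" using sg unfolding simple_graph_def by blast
  ultimately obtain A where A: "orientation E A" and bal: "\<forall>x. \<bar>imbalance A x\<bar> \<le> 1"
    using balanced_orientation_exists by blast
  have "finite A" using finite_orientation[OF \<open>finite E\<close> A] .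
  obtain col where col: "\<forall>e\<in>A. col e < K"
    and proper: "\<forall>c x. out_degree (colour_class A col c) x \<le> 1 \<and> in_degree (colour_class A col c) x \<le> 1"
    using proper_arc_colouring_exists[OF \<open>finite A\<close>] balanced_orientation_degrees_le[OF sg A] bal
    unfolding K_def by blast
  define C where "C c = (\<lambda>(a, b). {a, b}) ` colour_class A col c" for c
  have "(\<Union>c<K. C c) = (\<lambda>(a, b). {a, b}) ` A"
    using col by (auto simp: C_def colour_class_def)
  then have "(\<Union>c<K. C c) = E" using image_orientation[OF A] by simp
  moreover have "C c \<inter> C d = {}" if "c \<noteq> d" for c d
  proof -
    have "C c \<inter> C d = (\<lambda>(a, b). {a, b}) ` (colour_class A col c \<inter> colour_class A col d)"
      unfolding C_def by (rule inj_on_image_Int[OF inj_on_orientation[OF A], symmetric])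
        (simp_all add: colour_class_def)
    also have "colour_class A col c \<inter> colour_class A col d = {}"
      using that by (auto simp: colour_class_def)
    finally show ?thesis by simp
  qed
  moreover have "semiregular (C c)" for c
    unfolding C_def using \<open>finite A\<close> proper by (blast intro: semiregular_proper_colour_class)
  ultimately show ?thesis by blast
qed

lemma int_half_le_ceiling_half: "int ((n + 1) div 2) \<le> \<lceil>(real n + 1) / 2\<rceil>"
proof -
  have "2 * ((n + 1) div 2) \<le> n + 1" by simp
  then have "real ((n + 1) div 2) \<le> (real n + 1) / 2"
    unfolding of_nat_le_iff[where 'a = real, symmetric] by simp
  then show ?thesis by (simp add: le_ceiling_iff)
qed

theorem theorem3:
  fixes V :: "'a set" and E :: "'a set set"
  assumes "simple_graph V E" and "E \<noteq> {}"
  shows "wr E \<le> sr E \<and> int (sr E) \<le> \<lceil>(real (max_deg V E) + 1) / 2\<rceil>"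
proof -
  let ?K = "(max_deg V E + 1) div 2"
  obtain C where cover: "(\<Union>c<?K. C c) = E" "\<forall>c<?K. \<forall>d<?K. c \<noteq> d \<longrightarrow> C c \<inter> C d = {}"
    and semi: "\<forall>c. semiregular (C c)"
    using semiregular_cover_exists[OF assms(1)] by blast
  obtain m P where "m \<le> ?K" and P: "edge_partition E m P" "\<forall>i<m. \<exists>c<?K. P i = C c"
    using edge_partition_from_cover[OF cover] by blast
  have "\<forall>i<m. semiregular (P i)" using P(2) semi by auto
  then have "sr E \<le> m" "wr E \<le> sr E" using sr_le[OF P(1)] wr_le_sr[OF P(1)] by auto
  with \<open>m \<le> ?K\<close> int_half_le_ceiling_half[of "max_deg V E"] show ?thesis by linarith
qed

end
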